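(* Under the standing assumptions below, the solution operator $S:V^*\to V$, $u\mapsto y$, of the variational inequality (VI) is pointwise-a.e. convex: for all $u_1,u_2\in V^*$ and all $\lambda\in[0,1]$, $$S(\lambda u_1+(1-\lambda)u_2)\le\lambda S(u_1)+(1-\lambda)S(u_2)\quad\mu\text{-a.e. in }\Omega.$$
   Context: Standing assumptions: (i) $(\Omega,\Sigma,\mu)$ is a complete finite measure space with real Lebesgue spaces $L^p(\Omega)$, $1\le p\le\infty$. (ii) $V$ is a real separable Hilbert space with $V\subset L^q(\Omega)$, the embedding $V\hookrightarrow L^q(\Omega)$ continuous, compact and dense, for a fixed $q\in[2,\infty]$; moreover $[v]_{a_1}^{a_2}:=\min(a_2,\max(a_1,v))$ (pointwise a.e.) belongs to $V$ for all $v\in V$ and all $a_1,a_2\in[-\infty,\infty]$ with $a_1\le0\le a_2$. (iii) $U:=L^s(\Omega)$ with fixed $s\in(1,\infty)$, $s\ge q'$ (where $1/q+1/q'=1$), identified with a subset of $V^*$ via $L^s(\Omega)\cong L^{s'}(\Omega)^*\hookrightarrow L^q(\Omega)^*\hookrightarrow V^*$. (iv) $A:V\to V^*$ is linear and continuous with $\langle Av,v\rangle_V\ge c\|v\|_V^2$ for all $v\in V$ and some $c>0$, and $\min(\langle Av,[v]_{a_1}^{a_2}\rangle_V,\langle A[v]_{a_1}^{a_2},v\rangle_V)\ge\langle A[v]_{a_1}^{a_2},[v]_{a_1}^{a_2}\rangle_V$ for all $v\in V$ and all $a_1\le0\le a_2$ in $[-\infty,\infty]$. (v) $f:\mathbb{R}\to\mathbb{R}$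 is nondecreasing, globally Lipschitz and concave, identified with $f:V\to V^*$, $\langle f(v),w\rangle_V:=(f(v),w)_{L^2(\Omega)}$. (vi) $K\subset V$ is nonempty, closed, convex with: $v\in K$, $z\in V$ $\Rightarrow$ $v+\max(0,z)\in K$; and $v_1,v_2\in K\Rightarrow\min(v_1,v_2)\in K$. (VI): for $u\in V^*$ find $y\in K$ with $\langle Ay+f(y)-u,v-y\rangle_V\ge0$ for all $v\in K$. It is known that (VI) has a unique solution $S(u)$ for every $u\in V^*$ and that $S:V^*\to V$ is globally Lipschitz. *)

theory Defs
  imports "HOL-Analysis.Analysis" "HOL-Probability.Essential_Supremum"
begin

definition Lp_mem :: "'a measure \<Rightarrow> ereal \<Rightarrow> ('a \<Rightarrow> real) \<Rightarrow> bool" where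
  "Lp_mem M p g \<longleftrightarrow> g \<in> borel_measurable M \<and>
     (if p = \<infinity> then (\<exists>C. AE x in M. \<bar>g x\<bar> \<le> C)
      else integrable M (\<lambda>x. \<bar>g x\<bar> powr real_of_ereal p))"

definition Lp_norm :: "'a measure \<Rightarrow> ereal \<Rightarrow> ('a \<Rightarrow> real) \<Rightarrow> real" where
  "Lp_norm M p g =
     (if p = \<infinity> then real_of_ereal (esssup M (\<lambda>x. ereal \<bar>g x\<bar>))
      else (\<integral>x. \<bar>g x\<bar> powr real_of_ereal p \<partial>M) powr (1 / real_of_ereal p))"

definition clip :: "ereal \<Rightarrow> ereal \<Rightarrow> real \<Rightarrow> real" where
  "clip a1 a2 t = real_of_ereal (min a2 (max a1 (ereal t)))"

text \<open>Standing assumption (ii): V (a real separable Hilbert space, here a type) is embedded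
  via the injective linear map emb into L^q(M); the embedding is continuous, compact and dense,
  and V is closed under truncations.\<close>
definition embedding_ok :: "'a measure \<Rightarrow> ereal \<Rightarrow> ('v::{real_inner,complete_space} \<Rightarrow> 'a \<Rightarrow> real) \<Rightarrow> bool" where
  "embedding_ok M q emb \<longleftrightarrow>
     (\<exists>D::'v set. countable D \<and> closure D = UNIV) \<and>
     (\<forall>v w. AE x in M. emb (v + w) x = emb v x + emb w x) \<and>
     (\<forall>c v. AE x in M. emb (c *\<^sub>R v) x = c * emb v x) \<and>
     (\<forall>v. Lp_mem M q (emb v)) \<and>
     (\<forall>v. (AE x in M. emb v x = 0) \<longrightarrow> v = 0) \<and>
     (\<exists>C. \<forall>v. Lp_norm M q (emb v) \<le> C * norm v) \<and>
     (\<forall>vs::nat \<Rightarrow> 'v. bounded (range vs) \<longrightarrow>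
        (\<exists>r g. strict_mono r \<and> Lp_mem M q g \<and>
           (\<lambda>n. Lp_norm M q (\<lambda>x. emb (vs (r n)) x - g x)) \<longlonglongrightarrow> 0)) \<and>
     (\<forall>g. Lp_mem M q g \<longrightarrow> (\<forall>e>0. \<exists>v. Lp_norm M q (\<lambda>x. emb v x - g x) < e)) \<and>
     (\<forall>v a1 a2. a1 \<le> 0 \<and> 0 \<le> a2 \<longrightarrow>
        (\<exists>w. AE x in M. emb w x = clip a1 a2 (emb v x)))"

text \<open>Standing assumption (iv) for A : V -> V^*, duality pairing <A v, w> = A v w.\<close>
definition operator_ok :: "'a measure \<Rightarrow> ('v::{real_inner,complete_space} \<Rightarrow> 'a \<Rightarrow> real)
     \<Rightarrow> ('v \<Rightarrow> 'v \<Rightarrow>\<^sub>L real) \<Rightarrow> bool" where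
  "operator_ok M emb A \<longleftrightarrow>
     bounded_linear A \<and>
     (\<exists>c>0. \<forall>v. A v v \<ge> c * (norm v)\<^sup>2) \<and>
     (\<forall>v w a1 a2. a1 \<le> 0 \<and> 0 \<le> a2 \<and> (AE x in M. emb w x = clip a1 a2 (emb v x)) \<longrightarrow>
        min (A v w) (A w v) \<ge> A w w)"

definition nonlin_ok :: "(real \<Rightarrow> real) \<Rightarrow> bool" where
  "nonlin_ok f \<longleftrightarrow> mono f \<and> (\<exists>L. \<forall>x y. \<bar>f x - f y\<bar> \<le> L * \<bar>x - y\<bar>) \<and> concave_on UNIV f"

definition admissible_set_ok :: "'a measure \<Rightarrow> ('v::{real_inner,complete_space} \<Rightarrow> 'a \<Rightarrow> real)
     \<Rightarrow> 'v set \<Rightarrow> bool" where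
  "admissible_set_ok M emb K \<longleftrightarrow>
     K \<noteq> {} \<and> closed K \<and> convex K \<and>
     (\<forall>v\<in>K. \<forall>z w. (AE x in M. emb w x = max 0 (emb z x)) \<longrightarrow> v + w \<in> K) \<and>
     (\<forall>v1\<in>K. \<forall>v2\<in>K. \<forall>w. (AE x in M. emb w x = min (emb v1 x) (emb v2 x)) \<longrightarrow> w \<in> K)"

definition VI_solution :: "'a measure \<Rightarrow> ('v::{real_inner,complete_space} \<Rightarrow> 'a \<Rightarrow> real)
     \<Rightarrow> ('v \<Rightarrow> 'v \<Rightarrow>\<^sub>L real) \<Rightarrow> (real \<Rightarrow> real) \<Rightarrow> 'v set \<Rightarrow> ('v \<Rightarrow>\<^sub>L real) \<Rightarrow> 'v \<Rightarrow> bool" where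
  "VI_solution M emb A f K u y \<longleftrightarrow>
     y \<in> K \<and>
     (\<forall>v\<in>K. A y (v - y) + (\<integral>x. f (emb y x) * emb (v - y) x \<partial>M) - u (v - y) \<ge> 0)"

end

theory Submission imports Defs begin

text \<open>Put \<open>y\<^sub>t = t y\<^sub>1 + (1 - t) y\<^sub>2\<close> and let \<open>w = (y - y\<^sub>t)\<^sup>+\<close>.
  Testing the inequality of \<open>y\<^sub>i\<close> with \<open>y\<^sub>i + w\<close> and that of \<open>y\<close> with \<open>y - w = min y y\<^sub>t\<close>,
  and adding them with weights \<open>t\<close>, \<open>1 - t\<close>, \<open>1\<close>, the right-hand sides cancel and
  \<open>\<langle>A (y - y\<^sub>t), w\<rangle> + \<integral> (f y - t f y\<^sub>1 - (1 - t) f y\<^sub>2) w \<le> 0\<close>.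
  The integrand is nonnegative: where \<open>w > 0\<close> we have \<open>y > y\<^sub>t\<close>, so monotonicity and concavity
  give \<open>f y \<ge> f y\<^sub>t \<ge> t f y\<^sub>1 + (1 - t) f y\<^sub>2\<close>. Hence \<open>\<langle>A w, w\<rangle> \<le> \<langle>A (y - y\<^sub>t), w\<rangle> \<le> 0\<close>,
  and coercivity forces \<open>w = 0\<close>, i.e. \<open>y \<le> y\<^sub>t\<close> almost everywhere.\<close>

lemma Lp_mem_integrable_square:
  assumes "finite_measure M" and "2 \<le> q" and "Lp_mem M q g"
  shows "integrable M (\<lambda>x. (g x)\<^sup>2)"
proof -
  have "g \<in> borel_measurable M"
    using assms(3) by (simp add: Lp_mem_def)
  then have g_meas: "(\<lambda>x. (g x)\<^sup>2) \<in> borel_measurable M"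
    by measurable
  show ?thesis
  proof (cases "q = \<infinity>")
    case True
    then obtain C where C: "AE x in M. \<bar>g x\<bar> \<le> C"
      using assms(3) by (auto simp: Lp_mem_def)
    have int_bound: "integrable M (\<lambda>_. C\<^sup>2)"
      using assms(1) by (simp add: finite_measure.integrable_const)
    have "AE x in M. norm ((g x)\<^sup>2) \<le> norm (C\<^sup>2)"
      using C
    proof eventually_elim
      case (elim x)
      then have "\<bar>g x\<bar>\<^sup>2 \<le> C\<^sup>2" by (intro power_mono) auto
      then show ?case by simp
    qed
    with int_bound g_meas show ?thesis
      by (rule Bochner_Integration.integrable_bound)
  next
    case False
    then obtain r where r: "q = ereal r" and "2 \<le> r"
      using assms(2) by (cases q) auto
    have int_r: "integrable M (\<lambda>x. \<bar>g x\<bar> powr r)"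
      using assms(3) False r by (simp add: Lp_mem_def)
    have int_bound: "integrable M (\<lambda>x. 1 + \<bar>g x\<bar> powr r)"
      using assms(1) int_r by (intro Bochner_Integration.integrable_add finite_measure.integrable_const)
    have bound: "(g x)\<^sup>2 \<le> 1 + \<bar>g x\<bar> powr r" for x
    proof (cases "\<bar>g x\<bar> \<le> 1")
      case True
      then have "(g x)\<^sup>2 \<le> 1" by (simp add: abs_square_le_1)
      moreover have "0 \<le> \<bar>g x\<bar> powr r" by simp
      ultimately show ?thesis by linarith
    next
      case False
      then have "(g x)\<^sup>2 = \<bar>g x\<bar> powr 2" by (simp add: powr_numeral)
      also have "\<dots> \<le> \<bar>g x\<bar> powr r" using False \<open>2 \<le> r\<close> by (intro powr_mono) auto
      finally show ?thesis by simp
    qed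
    from int_bound g_meas show ?thesis
      by (rule Bochner_Integration.integrable_bound) (simp add: bound)
  qed
qed

lemma integrable_lipschitz_comp_mult:
  fixes f :: "real \<Rightarrow> real"
  assumes "finite_measure M" and "f \<in> borel_measurable borel"
    and lip: "\<And>s s'. \<bar>f s - f s'\<bar> \<le> L * \<bar>s - s'\<bar>"
    and "a \<in> borel_measurable M" and "b \<in> borel_measurable M"
    and "integrable M (\<lambda>x. (a x)\<^sup>2)" and "integrable M (\<lambda>x. (b x)\<^sup>2)"
  shows "integrable M (\<lambda>x. f (a x) * b x)"
proof (rule Bochner_Integration.integrable_bound)
  show "integrable M (\<lambda>x. \<bar>f 0\<bar> * (1 + (b x)\<^sup>2) + \<bar>L\<bar> * ((a x)\<^sup>2 + (b x)\<^sup>2))"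
    using assms(1,6,7)
    by (intro Bochner_Integration.integrable_add integrable_mult_right finite_measure.integrable_const)
  show "(\<lambda>x. f (a x) * b x) \<in> borel_measurable M"
    using measurable_compose[OF assms(4,2)] assms(5) by measurable
  show "AE x in M. norm (f (a x) * b x)
      \<le> norm (\<bar>f 0\<bar> * (1 + (b x)\<^sup>2) + \<bar>L\<bar> * ((a x)\<^sup>2 + (b x)\<^sup>2))"
  proof (rule AE_I2)
    fix x
    have "L * \<bar>a x\<bar> \<le> \<bar>L\<bar> * \<bar>a x\<bar>"
      by (simp add: mult_right_mono)
    then have f_growth: "\<bar>f (a x)\<bar> \<le> \<bar>f 0\<bar> + \<bar>L\<bar> * \<bar>a x\<bar>"
      using lip[of "a x" 0] by (simp add: abs_triangle_ineq2 [THEN order_trans])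
    have b_bound: "\<bar>b x\<bar> \<le> 1 + (b x)\<^sup>2"
      using sum_power2_ge_zero[of "\<bar>b x\<bar> - 1" 0] by (simp add: power2_diff)
    have ab_bound: "\<bar>a x\<bar> * \<bar>b x\<bar> \<le> (a x)\<^sup>2 + (b x)\<^sup>2"
    proof -
      have "0 \<le> (\<bar>a x\<bar> - \<bar>b x\<bar>)\<^sup>2" by simp
      then have "2 * (\<bar>a x\<bar> * \<bar>b x\<bar>) \<le> (a x)\<^sup>2 + (b x)\<^sup>2"
        by (simp add: power2_diff)
      moreover have "0 \<le> \<bar>a x\<bar> * \<bar>b x\<bar>" by simp
      ultimately show ?thesis by linarith
    qed
    have "\<bar>f (a x) * b x\<bar> \<le> (\<bar>f 0\<bar> + \<bar>L\<bar> * \<bar>a x\<bar>) * \<bar>b x\<bar>"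
      using f_growth by (simp add: abs_mult mult_right_mono)
    also have "\<dots> = \<bar>f 0\<bar> * \<bar>b x\<bar> + \<bar>L\<bar> * (\<bar>a x\<bar> * \<bar>b x\<bar>)"
      by (simp add: algebra_simps)
    also have "\<dots> \<le> \<bar>f 0\<bar> * (1 + (b x)\<^sup>2) + \<bar>L\<bar> * ((a x)\<^sup>2 + (b x)\<^sup>2)"
      using b_bound ab_bound by (intro add_mono mult_left_mono) auto
    finally show "norm (f (a x) * b x) \<le> norm (\<bar>f 0\<bar> * (1 + (b x)\<^sup>2) + \<bar>L\<bar> * ((a x)\<^sup>2 + (b x)\<^sup>2))"
      by simp
  qed
qed

lemma mono_concave_defect_mult_positive_part:
  fixes f :: "real \<Rightarrow> real"
  assumes "mono f" and "concave_on UNIV f" and "0 \<le> t" and "t \<le> 1"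
  shows "0 \<le> (f y - t * f y1 - (1 - t) * f y2) * max 0 (y - (t * y1 + (1 - t) * y2))"
proof (cases "y \<le> t * y1 + (1 - t) * y2")
  case False
  have "t * f y1 + (1 - t) * f y2 \<le> f (t * y1 + (1 - t) * y2)"
    using concave_onD[OF assms(2), of "1 - t" y1 y2] assms(3,4) by simp
  also have "\<dots> \<le> f y"
    using False assms(1) by (simp add: monoD)
  finally show ?thesis using False by simp
qed simp

lemma clip_0_infinity: "clip 0 \<infinity> s = max 0 s"
  by (cases "s \<le> 0") (auto simp: clip_def max_def)

lemma VI_solution_variation:
  assumes "VI_solution M emb A f K u y" and "y + d \<in> K"
  shows "0 \<le> A y d + (\<integral>x. f (emb y x) * emb d x \<partial>M) - u d"
  using assms unfolding VI_solution_def by (metis add_diff_cancel_left')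

locale VI_setting =
  fixes M :: "'a measure" and q :: ereal
    and emb :: "'v::{real_inner,complete_space} \<Rightarrow> 'a \<Rightarrow> real"
    and A :: "'v \<Rightarrow> 'v \<Rightarrow>\<^sub>L real" and f :: "real \<Rightarrow> real" and K :: "'v set"
  assumes finite: "finite_measure M"
    and q: "2 \<le> q"
    and embedding: "embedding_ok M q emb"
    and operator: "operator_ok M emb A"
    and nonlin: "nonlin_ok f"
    and admissible: "admissible_set_ok M emb K"
begin

lemma emb_add: "AE x in M. emb (v + w) x = emb v x + emb w x"
  using embedding by (simp add: embedding_ok_def)

lemma emb_scaleR: "AE x in M. emb (c *\<^sub>R v) x = c * emb v x"
  using embedding by (simp add: embedding_ok_def)

lemma emb_Lp_mem: "Lp_mem M q (emb v)"
  using embedding by (simp add: embedding_ok_def)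

lemma emb_measurable: "emb v \<in> borel_measurable M"
  using emb_Lp_mem by (simp add: Lp_mem_def)

lemma emb_uminus: "AE x in M. emb (- v) x = - emb v x"
  using emb_scaleR[of "-1" v] by simp

lemma emb_diff: "AE x in M. emb (v - w) x = emb v x - emb w x"
  using emb_add[of v "- w"] emb_uminus[of w] by eventually_elim simp

lemma emb_convex_comb: "AE x in M. emb (t *\<^sub>R v + s *\<^sub>R w) x = t * emb v x + s * emb w x"
  using emb_add[of "t *\<^sub>R v" "s *\<^sub>R w"] emb_scaleR[of t v] emb_scaleR[of s w]
  by eventually_elim simp

lemma emb_clip:
  assumes "a1 \<le> 0" and "0 \<le> a2"
  shows "\<exists>w. AE x in M. emb w x = clip a1 a2 (emb v x)"
  using embedding assms by (simp add: embedding_ok_def)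

lemma emb_positive_part: obtains w where "AE x in M. emb w x = max 0 (emb z x)"
  using emb_clip[of 0 \<infinity> z] by (auto simp: clip_0_infinity)

lemma integrable_nonlin_pairing: "integrable M (\<lambda>x. f (emb v x) * emb w x)"
proof -
  obtain L where L: "\<And>s s'. \<bar>f s - f s'\<bar> \<le> L * \<bar>s - s'\<bar>"
    using nonlin by (auto simp: nonlin_ok_def)
  have "f \<in> borel_measurable borel"
    using nonlin by (simp add: nonlin_ok_def borel_measurable_mono)
  from finite this L emb_measurable emb_measurable
    Lp_mem_integrable_square[OF finite q emb_Lp_mem] Lp_mem_integrable_square[OF finite q emb_Lp_mem]
  show ?thesis
    by (rule integrable_lipschitz_comp_mult)
qed

lemma nonlin_pairing_uminus:
  "(\<integral>x. f (emb v x) * emb (- w) x \<partial>M) = - (\<integral>x. f (emb v x) * emb w x \<partial>M)"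
proof -
  have "(\<integral>x. f (emb v x) * emb (- w) x \<partial>M) = (\<integral>x. - (f (emb v x) * emb w x) \<partial>M)"
    using emb_uminus[of w] integrable_nonlin_pairing
    by (intro integral_cong_AE) (auto elim: AE_mp)
  then show ?thesis by simp
qed

lemma A_linear: "linear A"
  using operator by (simp add: operator_ok_def bounded_linear.linear)

lemma A_clip_le:
  assumes "a1 \<le> 0" and "0 \<le> a2" and "AE x in M. emb w x = clip a1 a2 (emb v x)"
  shows "A w w \<le> A v w"
  using operator assms unfolding operator_ok_def by fastforce

lemma A_positive_part_le:
  assumes "AE x in M. emb w x = max 0 (emb z x)"
  shows "A w w \<le> A z w"
  using A_clip_le[of 0 \<infinity> w z] assms by (simp add: clip_0_infinity)

lemma A_nonpos_imp_zero:
  assumes "A w w \<le> 0"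
  shows "w = 0"
proof -
  obtain c where "c > 0" and "c * (norm w)\<^sup>2 \<le> A w w"
    using operator unfolding operator_ok_def by blast
  with assms have "(norm w)\<^sup>2 \<le> 0"
    by (smt (verit) mult_pos_pos)
  then show ?thesis by simp
qed

lemma K_add_positive_part:
  assumes "v \<in> K" and "AE x in M. emb w x = max 0 (emb z x)"
  shows "v + w \<in> K"
  using admissible assms unfolding admissible_set_ok_def by blast

lemma K_convex: "convex K"
  using admissible by (simp add: admissible_set_ok_def)

lemma K_min:
  assumes "v1 \<in> K" and "v2 \<in> K" and "AE x in M. emb w x = min (emb v1 x) (emb v2 x)"
  shows "w \<in> K"
  using admissible assms unfolding admissible_set_ok_def by blast

lemma nonlin_pairing_convex_defect_nonneg:
  assumes "0 \<le> t" and "t \<le> 1"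
    and w: "AE x in M. emb w x = max 0 (emb (y - (t *\<^sub>R y1 + (1 - t) *\<^sub>R y2)) x)"
  shows "t * (\<integral>x. f (emb y1 x) * emb w x \<partial>M) + (1 - t) * (\<integral>x. f (emb y2 x) * emb w x \<partial>M)
    \<le> (\<integral>x. f (emb y x) * emb w x \<partial>M)"
proof -
  have "0 \<le> (\<integral>x. (f (emb y x) - t * f (emb y1 x) - (1 - t) * f (emb y2 x)) * emb w x \<partial>M)"
  proof (rule integral_nonneg_AE)
    show "AE x in M. 0 \<le> (f (emb y x) - t * f (emb y1 x) - (1 - t) * f (emb y2 x)) * emb w x"
      using w emb_diff[of y "t *\<^sub>R y1 + (1 - t) *\<^sub>R y2"] emb_convex_comb[of t y1 "1 - t" y2]
    proof eventually_elim
      case (elim x)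
      then show ?case
        using mono_concave_defect_mult_positive_part[of f t "emb y x" "emb y1 x" "emb y2 x"]
          nonlin assms(1,2) by (simp add: nonlin_ok_def)
    qed
  qed
  also have "\<dots> = (\<integral>x. f (emb y x) * emb w x \<partial>M)
      - t * (\<integral>x. f (emb y1 x) * emb w x \<partial>M) - (1 - t) * (\<integral>x. f (emb y2 x) * emb w x \<partial>M)"
    using integrable_nonlin_pairing by (simp add: algebra_simps)
  finally show ?thesis by simp
qed

lemma VI_solution_convex_comb_positive_part:
  assumes "0 \<le> t" and "t \<le> 1"
    and sol1: "VI_solution M emb A f K u1 y1"
    and sol2: "VI_solution M emb A f K u2 y2"
    and sol: "VI_solution M emb A f K (t *\<^sub>R u1 + (1 - t) *\<^sub>R u2) y"
    and w: "AE x in M. emb w x = max 0 (emb (y - (t *\<^sub>R y1 + (1 - t) *\<^sub>R y2)) x)"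
  shows "A w w \<le> 0"
proof -
  let ?yt = "t *\<^sub>R y1 + (1 - t) *\<^sub>R y2"
  let ?P = "\<lambda>v. \<integral>x. f (emb v x) * emb w x \<partial>M"
  have y1K: "y1 \<in> K" and y2K: "y2 \<in> K" and yK: "y \<in> K"
    using sol1 sol2 sol by (simp_all add: VI_solution_def)
  have "?yt \<in> K"
    using y1K y2K assms(1,2) by (intro convexD[OF K_convex]) auto
  moreover have "AE x in M. emb (y + - w) x = min (emb y x) (emb ?yt x)"
    using w emb_add[of y "- w"] emb_uminus[of w] emb_diff[of y ?yt]
    by eventually_elim (simp add: min_def max_def)
  ultimately have "y + - w \<in> K"
    using yK K_min by blast
  from VI_solution_variation[OF sol this]
  have vi_y: "0 \<le> - A y w - ?P y + t * u1 w + (1 - t) * u2 w"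
    by (simp add: nonlin_pairing_uminus blinfun.minus_right plus_blinfun.rep_eq scaleR_blinfun.rep_eq)
  have "0 \<le> A y1 w + ?P y1 - u1 w"
    using VI_solution_variation[OF sol1 K_add_positive_part[OF y1K w]] .
  then have vi_y1: "0 \<le> t * A y1 w + t * ?P y1 - t * u1 w"
    using assms(1) by (metis mult_nonneg_nonneg right_diff_distrib distrib_left)
  have "0 \<le> A y2 w + ?P y2 - u2 w"
    using VI_solution_variation[OF sol2 K_add_positive_part[OF y2K w]] .
  then have vi_y2: "0 \<le> (1 - t) * A y2 w + (1 - t) * ?P y2 - (1 - t) * u2 w"
    using assms(2) by (metis diff_ge_0_iff_ge mult_nonneg_nonneg right_diff_distrib distrib_left)
  have "A (y - ?yt) w = A y w - t * A y1 w - (1 - t) * A y2 w"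
    using A_linear
    by (simp add: linear_diff linear_add linear_scale minus_blinfun.rep_eq plus_blinfun.rep_eq
        scaleR_blinfun.rep_eq)
  moreover have "t * ?P y1 + (1 - t) * ?P y2 \<le> ?P y"
    using nonlin_pairing_convex_defect_nonneg[OF assms(1,2) w] .
  ultimately have "A (y - ?yt) w \<le> 0"
    using vi_y vi_y1 vi_y2 by linarith
  with A_positive_part_le[OF w] show ?thesis by linarith
qed

end

theorem mainTheorem8:
  fixes M :: "'a measure" and q :: ereal
    and emb :: "'v::{real_inner,complete_space} \<Rightarrow> 'a \<Rightarrow> real"
    and A :: "'v \<Rightarrow> 'v \<Rightarrow>\<^sub>L real" and f :: "real \<Rightarrow> real" and K :: "'v set"
    and u1 u2 :: "'v \<Rightarrow>\<^sub>L real" and y1 y2 y :: 'v and t :: real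
  assumes "finite_measure M" and "complete_measure M"
    and "2 \<le> q"
    and "embedding_ok M q emb"
    and "operator_ok M emb A"
    and "nonlin_ok f"
    and "admissible_set_ok M emb K"
    and "0 \<le> t" and "t \<le> 1"
    and "VI_solution M emb A f K u1 y1"
    and "VI_solution M emb A f K u2 y2"
    and "VI_solution M emb A f K (t *\<^sub>R u1 + (1 - t) *\<^sub>R u2) y"
  shows "AE x in M. emb y x \<le> t * emb y1 x + (1 - t) * emb y2 x"
proof -
  interpret VI_setting M q emb A f K
    using assms by (simp add: VI_setting_def)
  let ?yt = "t *\<^sub>R y1 + (1 - t) *\<^sub>R y2"
  obtain w where w: "AE x in M. emb w x = max 0 (emb (y - ?yt) x)"
    by (rule emb_positive_part)
  have "w = 0"
    using VI_solution_convex_comb_positive_part[OF assms(8-12) w] by (rule A_nonpos_imp_zero)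
  then have "AE x in M. emb w x = 0"
    using emb_scaleR[of 0 w] by simp
  then show ?thesis
    using w emb_diff[of y ?yt] emb_convex_comb[of t y1 "1 - t" y2] by eventually_elim auto
qed

end
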